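(* Let $\mathcal{A}$ be a learning-augmented memory-constrained algorithm for the $2$-server problem on the line and let $\lambda\in(0,1]$. If $\mathcal{A}$ is $(1+\lambda)$-consistent, then it is not $\beta'$-robust for any $\beta'<1+1/\lambda$ (i.e., it is at least $(1+1/\lambda)$-robust).
   Context: The $2$-server problem on the line: servers on $\mathbb{R}$, requests revealed online, each served by moving a server to it; cost = total distance moved; $\mathrm{OPT}$ is the optimal offline cost. A prediction gives for each request an index in $\{1,2\}$ (the predicted server, servers labeled by position); FtP serves each request by the predicted server, and $\eta=\mathrm{FtP}-\mathrm{OPT}$. $\alpha$-consistent: $\mathcal{A}(I)\le\alpha\,\mathrm{OPT}(I)+c$ for every instance and every prediction with $\eta=0$; $\beta$-robust: $\mathcal{A}(I)\le\beta\,\mathrm{OPT}(I)+c$ for every instance and prediction; $c$ depends only on the initial configuration. Memory-constrained: each decision depends only on the current configuration, current request and current prediction; several servers may be moved per request; and for any set of $k$ distinct points and any configuration there exists a finite sequence of requests among these points (a force) after which each point contains exactly one server. *)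

theory Defs
  imports Complex_Main
begin

text \<open>A configuration is a pair of server
positions; configurations handled by the online algorithm are kept sorted
(first component = left server = server 1, second = right server = server 2),
so that servers are labelled by position and the algorithm cannot store
information in the labelling.\<close>

type_synonym conf = "real \<times> real"

definition sorted_conf :: "conf \<Rightarrow> bool" where
  "sorted_conf c \<longleftrightarrow> fst c \<le> snd c"

definition covers :: "conf \<Rightarrow> real \<Rightarrow> bool" where
  "covers c r \<longleftrightarrow> fst c = r \<or> snd c = r"

text \<open>Cost of moving from one configuration to another (servers are
interchangeable, so the cheaper of the two matchings).\<close>
definition cdist :: "conf \<Rightarrow> conf \<Rightarrow> real" where
  "cdist c d = min (\<bar>fst c - fst d\<bar> + \<bar>snd c - snd d\<bar>)
                   (\<bar>fst c - snd d\<bar> + \<bar>snd c - fst d\<bar>)"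

text \<open>A memory-constrained online algorithm: new configuration as a function of
the current configuration, the current request and the current predicted index.\<close>
type_synonym alg = "conf \<Rightarrow> real \<Rightarrow> nat \<Rightarrow> conf"

text \<open>An instance part: list of (request, predicted server index).\<close>
fun alg_cost :: "alg \<Rightarrow> conf \<Rightarrow> (real \<times> nat) list \<Rightarrow> real" where
  "alg_cost A c [] = 0"
| "alg_cost A c ((r, i) # rest) = cdist c (A c r i) + alg_cost A (A c r i) rest"

fun alg_final :: "alg \<Rightarrow> conf \<Rightarrow> (real \<times> nat) list \<Rightarrow> conf" where
  "alg_final A c [] = c"
| "alg_final A c ((r, i) # rest) = alg_final A (A c r i) rest"

text \<open>Follow-the-Prediction: serve each request by the predicted server
(1 = left, 2 = right).\<close>
definition ftp_step :: "conf \<Rightarrow> real \<Rightarrow> nat \<Rightarrow> conf" where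
  "ftp_step c r i = (if i = 1 then (min r (snd c), max r (snd c))
                     else (min (fst c) r, max (fst c) r))"

definition ftp_step_cost :: "conf \<Rightarrow> real \<Rightarrow> nat \<Rightarrow> real" where
  "ftp_step_cost c r i = (if i = 1 then \<bar>fst c - r\<bar> else \<bar>snd c - r\<bar>)"

fun ftp_cost :: "conf \<Rightarrow> (real \<times> nat) list \<Rightarrow> real" where
  "ftp_cost c [] = 0"
| "ftp_cost c ((r, i) # rest) = ftp_step_cost c r i + ftp_cost (ftp_step c r i) rest"

fun sched_cost :: "conf \<Rightarrow> conf list \<Rightarrow> real" where
  "sched_cost c [] = 0"
| "sched_cost c (d # ds) = cdist c d + sched_cost d ds"

definition opt :: "conf \<Rightarrow> real list \<Rightarrow> real" where
  "opt c rs = Inf {sched_cost c cs | cs. length cs = length rs \<and>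
                     (\<forall>j < length rs. covers (cs ! j) (rs ! j))}"

definition valid_preds :: "(real \<times> nat) list \<Rightarrow> bool" where
  "valid_preds I \<longleftrightarrow> (\<forall>x \<in> set I. snd x \<in> {1, 2})"

definition eta :: "conf \<Rightarrow> (real \<times> nat) list \<Rightarrow> real" where
  "eta c I = ftp_cost c I - opt c (map fst I)"

definition consistent :: "alg \<Rightarrow> real \<Rightarrow> bool" where
  "consistent A \<alpha> \<longleftrightarrow> (\<exists>C :: conf \<Rightarrow> real. \<forall>c I. sorted_conf c \<and> valid_preds I \<and> eta c I = 0
      \<longrightarrow> alg_cost A c I \<le> \<alpha> * opt c (map fst I) + C c)"

definition robust :: "alg \<Rightarrow> real \<Rightarrow> bool" where
  "robust A \<beta> \<longleftrightarrow> (\<exists>C :: conf \<Rightarrow> real. \<forall>c I. sorted_conf c \<and> valid_preds I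
      \<longrightarrow> alg_cost A c I \<le> \<beta> * opt c (map fst I) + C c)"

text \<open>Memory-constrained algorithm for k = 2: it always serves the request, keeps
configurations sorted, and admits a force: for any two distinct points and any
configuration there is a finite request sequence among these points after which
each point holds exactly one server (whatever the predictions are).\<close>
definition memory_constrained :: "alg \<Rightarrow> bool" where
  "memory_constrained A \<longleftrightarrow>
     (\<forall>c r i. sorted_conf c \<longrightarrow> sorted_conf (A c r i) \<and> covers (A c r i) r) \<and>
     (\<forall>c p q. sorted_conf c \<and> p \<noteq> q \<longrightarrow>
        (\<exists>rs. set rs \<subseteq> {p, q} \<and>
           (\<forall>ps. length ps = length rs \<and> set ps \<subseteq> {1, 2} \<longrightarrow>
              (let d = alg_final A c (zip rs ps) in d = (p, q) \<or> d = (q, p)))))"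

end

theory Submission
  imports Defs
begin

text \<open>Take the configuration \<open>(0, z)\<close> with \<open>z > 3 + 2 lam\<close>, and the requests \<open>1, 0, z\<close> predicted
  for the servers 1, 1, 2, followed by a force back to \<open>(0, z)\<close> that Follow-the-Prediction serves
  for free.  FtP pays 2 per repetition, which is optimal, so the predictions are perfect and
  \<open>(1 + lam)\<close>-consistency, applied to many repetitions, shows that the moves
  \<open>(0, z) \<rightarrow> t\<^sub>1 \<rightarrow> t\<^sub>2\<close> of the algorithm on the requests \<open>1, 0\<close>, plus the way back to \<open>(0, z)\<close>, cost at
  most \<open>2 + 2 lam\<close>.  This forces \<open>t\<^sub>2 = (0, z')\<close> with \<open>z - z' \<le> lam\<close>, the two moves costing at least
  \<open>2 + (z - z')\<close>.

  As decisions depend only on the current configuration, request and prediction, the same happens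
  whenever \<open>1, 0\<close> is requested in such a configuration.  Starting in \<open>(0, b)\<close>, the adversary
  requests \<open>1, 0\<close> for \<open>N\<close> rounds, then \<open>b\<close>, and forces back to \<open>(0, b)\<close>.  The algorithm pays 2 per
  round while its right server drifts towards 0 by at most \<open>lam\<close> per round, so it pays either
  \<open>2 N\<close>, or \<open>2 (b - 3 - 2 lam) / lam\<close> for the rounds plus \<open>2 (b - 3 - 2 lam)\<close> for the drift and the
  return to \<open>b\<close>.  Offline, a server parked at 1 serves everything for \<open>2 b\<close>, and letting \<open>b\<close> and
  \<open>N\<close> grow gives the ratio \<open>1 + 1 / lam\<close>.\<close>

lemma cdist_nonneg: "0 \<le> cdist c d"
  by (simp add: cdist_def)

lemma cdist_self [simp]: "cdist c c = 0"
  by (simp add: cdist_def)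

lemma cdist_triangle: "cdist c e \<le> cdist c d + cdist d e"
  unfolding cdist_def by (simp add: min_def; smt (verit))

lemma cdist_same_fst [simp]: "cdist (p, s) (p, t) = \<bar>s - t\<bar>"
  unfolding cdist_def by (simp add: min_def)

lemma le_of_forall_real_of_nat_mult_le:
  fixes K B C :: real
  assumes "\<And>n::nat. real n * K \<le> real n * B + C"
  shows "K \<le> B"
proof (rule ccontr)
  assume "\<not> K \<le> B"
  then have "0 < K - B" by simp
  obtain n :: nat where "C / (K - B) < real n" using reals_Archimedean2 by blast
  with \<open>0 < K - B\<close> have "C < real n * (K - B)" by (simp add: pos_divide_less_eq)
  with assms[of n] show False by (simp add: right_diff_distrib)
qed

section \<open>Costs of online runs and of offline schedules\<close>

lemma alg_final_append: "alg_final A c (xs @ ys) = alg_final A (alg_final A c xs) ys"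
  by (induction A c xs rule: alg_final.induct) auto

lemma alg_cost_append: "alg_cost A c (xs @ ys) = alg_cost A c xs + alg_cost A (alg_final A c xs) ys"
  by (induction A c xs rule: alg_final.induct) auto

lemma cdist_alg_final_le_alg_cost: "cdist c (alg_final A c xs) \<le> alg_cost A c xs"
proof (induction A c xs rule: alg_final.induct)
  case (2 A c r i rest)
  then show ?case using cdist_triangle[of c "alg_final A (A c r i) rest" "A c r i"] by simp
qed simp

lemma alg_cost_with_return_le:
  assumes "alg_final A c (xs @ ys) = c"
  shows "alg_cost A c xs + cdist (alg_final A c xs) c \<le> alg_cost A c (xs @ ys)"
  using cdist_alg_final_le_alg_cost[of "alg_final A c xs" A ys] assms
  by (simp add: alg_cost_append alg_final_append)

lemma alg_cost_replicate:
  assumes "alg_final A c cyc = c"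
  shows "alg_cost A c (concat (replicate n cyc)) = real n * alg_cost A c cyc"
proof -
  have "alg_final A c (concat (replicate n cyc)) = c \<and>
      alg_cost A c (concat (replicate n cyc)) = real n * alg_cost A c cyc"
    by (induction n) (auto simp: alg_cost_append alg_final_append assms algebra_simps)
  then show ?thesis ..
qed

fun ftp_final :: "conf \<Rightarrow> (real \<times> nat) list \<Rightarrow> conf" where
  "ftp_final c [] = c"
| "ftp_final c ((r, i) # rest) = ftp_final (ftp_step c r i) rest"

lemma ftp_final_append: "ftp_final c (xs @ ys) = ftp_final (ftp_final c xs) ys"
  by (induction c xs rule: ftp_final.induct) auto

lemma ftp_cost_append: "ftp_cost c (xs @ ys) = ftp_cost c xs + ftp_cost (ftp_final c xs) ys"
  by (induction c xs rule: ftp_final.induct) auto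

lemma ftp_cost_replicate:
  assumes "ftp_final c cyc = c"
  shows "ftp_cost c (concat (replicate n cyc)) = real n * ftp_cost c cyc"
proof -
  have "ftp_final c (concat (replicate n cyc)) = c \<and>
      ftp_cost c (concat (replicate n cyc)) = real n * ftp_cost c cyc"
    by (induction n) (auto simp: ftp_cost_append ftp_final_append assms algebra_simps)
  then show ?thesis ..
qed

lemma ftp_stationary:
  assumes "p \<le> q" "set rs \<subseteq> {p, q}"
  defines "I \<equiv> map (\<lambda>r. (r, if r = p then 1 else 2)) rs"
  shows "ftp_final (p, q) I = (p, q)" and "ftp_cost (p, q) I = 0"
  using assms(2) unfolding I_def
  by (induction rs) (use assms(1) in \<open>auto simp: ftp_step_def ftp_step_cost_def\<close>)

lemma sched_cost_nonneg: "0 \<le> sched_cost c cs"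
  by (induction cs arbitrary: c) (auto intro: add_nonneg_nonneg cdist_nonneg)

lemma sched_cost_append: "sched_cost c (xs @ ys) = sched_cost c xs + sched_cost (last (c # xs)) ys"
  by (induction xs arbitrary: c) auto

lemma cdist_last_le_sched_cost: "cdist c (last (c # cs)) \<le> sched_cost c cs"
proof (induction cs arbitrary: c)
  case (Cons d cs)
  have "cdist c (last (d # cs)) \<le> cdist c d + cdist d (last (d # cs))"
    by (rule cdist_triangle)
  with Cons.IH[of d] show ?case by simp
qed simp

lemma sched_cost_replicate: "sched_cost c (replicate n d) = (if n = 0 then 0 else cdist c d)"
  by (induction n arbitrary: c) auto

lemma sched_cost_concat_replicate:
  assumes "cs \<noteq> []" "last cs = c"
  shows "sched_cost c (concat (replicate n cs)) = real n * sched_cost c cs"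
  by (induction n) (auto simp: sched_cost_append assms algebra_simps)

lemma covers_replicate:
  assumes "set rs \<subseteq> {fst d, snd d}"
  shows "list_all2 covers (replicate (length rs) d) rs"
  using assms by (induction rs) (auto simp: covers_def)

lemma opt_eq_Inf_sched_cost: "opt c rs = Inf (sched_cost c ` {cs. list_all2 covers cs rs})"
  unfolding opt_def list_all2_conv_all_nth by (simp add: setcompr_eq_image cong: conj_cong)

lemma opt_le_sched_cost:
  assumes "list_all2 covers cs rs"
  shows "opt c rs \<le> sched_cost c cs"
  unfolding opt_eq_Inf_sched_cost
proof (rule cInf_lower)
  show "bdd_below (sched_cost c ` {cs. list_all2 covers cs rs})"
    by (rule bdd_belowI[of _ 0]) (use sched_cost_nonneg in blast)
qed (use assms in simp)

lemma le_opt: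
  assumes "\<And>cs. list_all2 covers cs rs \<Longrightarrow> L \<le> sched_cost c cs"
  shows "L \<le> opt c rs"
  unfolding opt_eq_Inf_sched_cost
proof (rule cInf_greatest)
  have "list_all2 covers (map (\<lambda>r. (r, r)) rs) rs"
    by (induction rs) (auto simp: covers_def)
  then show "sched_cost c ` {cs. list_all2 covers cs rs} \<noteq> {}" by blast
qed (use assms in blast)

lemma opt_nonneg: "0 \<le> opt c rs"
  by (rule le_opt) (rule sched_cost_nonneg)

lemma opt_concat_replicate_le:
  assumes "list_all2 covers sc rs" "sc \<noteq> []" "last sc = c"
  shows "opt c (concat (replicate n rs)) \<le> real n * sched_cost c sc"
proof -
  have "list_all2 covers (concat (replicate n sc)) (concat (replicate n rs))"
    using assms(1) by (induction n) (auto intro: list_all2_appendI)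
  then have "opt c (concat (replicate n rs)) \<le> sched_cost c (concat (replicate n sc))"
    by (rule opt_le_sched_cost)
  also have "\<dots> = real n * sched_cost c sc"
    using assms(2,3) by (rule sched_cost_concat_replicate)
  finally show ?thesis .
qed

text \<open>An instance that returns to its start can be repeated arbitrarily often, which removes
  the additive constant of a competitive bound.\<close>
lemma periodic_cost_le:
  assumes final: "alg_final A c cyc = c" and "0 \<le> \<alpha>"
    and opt: "\<And>n. opt c (map fst (concat (replicate n cyc))) \<le> real n * S"
    and bound: "\<And>n. alg_cost A c (concat (replicate n cyc))
                  \<le> \<alpha> * opt c (map fst (concat (replicate n cyc))) + C"
  shows "alg_cost A c cyc \<le> \<alpha> * S"
proof (rule le_of_forall_real_of_nat_mult_le)
  fix n
  have "real n * alg_cost A c cyc = alg_cost A c (concat (replicate n cyc))"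
    using final by (simp add: alg_cost_replicate)
  also have "\<dots> \<le> \<alpha> * (real n * S) + C"
    using bound[of n] opt[of n] \<open>0 \<le> \<alpha>\<close> mult_left_mono by fastforce
  finally show "real n * alg_cost A c cyc \<le> real n * (\<alpha> * S) + C"
    by (simp add: algebra_simps)
qed

lemma robust_mono:
  assumes "robust A \<beta>" "\<beta> \<le> \<beta>'"
  shows "robust A \<beta>'"
  using assms order_trans[OF _ add_right_mono[OF mult_right_mono[OF _ opt_nonneg]]]
  unfolding robust_def by blast

lemma robust_periodic_cost_le:
  assumes "robust A \<beta>" "0 \<le> \<beta>" "sorted_conf c" "valid_preds cyc" "alg_final A c cyc = c"
    and "list_all2 covers sc (map fst cyc)" "sc \<noteq> []" "last sc = c"
  shows "alg_cost A c cyc \<le> \<beta> * sched_cost c sc"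
proof -
  obtain C where C: "\<And>c I. sorted_conf c \<Longrightarrow> valid_preds I
      \<Longrightarrow> alg_cost A c I \<le> \<beta> * opt c (map fst I) + C c"
    using assms(1) unfolding robust_def by blast
  have "valid_preds (concat (replicate n cyc))" for n
    using assms(4) by (auto simp: valid_preds_def)
  moreover have "opt c (map fst (concat (replicate n cyc))) \<le> real n * sched_cost c sc" for n
    using opt_concat_replicate_le[OF assms(6-8)] by (simp add: map_concat)
  ultimately show ?thesis
    using periodic_cost_le[OF assms(5,2)] C assms(3) by blast
qed

section \<open>Memory-constrained algorithms\<close>

lemma memory_constrained_step:
  assumes "memory_constrained A" "sorted_conf c"
  shows "sorted_conf (A c r i)" and "covers (A c r i) r"
  using assms unfolding memory_constrained_def by blast+

lemma memory_constrained_sorted_final: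
  assumes "memory_constrained A" "sorted_conf c"
  shows "sorted_conf (alg_final A c I)"
  using assms(2)
proof (induction I arbitrary: c)
  case (Cons x I)
  then show ?case by (cases x) (simp add: memory_constrained_step[OF assms(1)])
qed simp

lemma memory_constrained_force:
  assumes "memory_constrained A" "sorted_conf c" "p < q"
  obtains rs where "set rs \<subseteq> {p, q}"
    and "\<And>f. (\<And>r. f r \<in> {1, 2}) \<Longrightarrow> alg_final A c (map (\<lambda>r. (r, f r)) rs) = (p, q)"
proof -
  from assms obtain rs where rs: "set rs \<subseteq> {p, q}"
    and force: "\<And>ps. length ps = length rs \<Longrightarrow> set ps \<subseteq> {1, 2} \<Longrightarrow>
        alg_final A c (zip rs ps) = (p, q) \<or> alg_final A c (zip rs ps) = (q, p)"
    unfolding memory_constrained_def Let_def by (metis less_irrefl)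
  show ?thesis
  proof (rule that[OF rs])
    fix f :: "real \<Rightarrow> nat"
    assume "\<And>r. f r \<in> {1, 2}"
    then have "alg_final A c (zip rs (map f rs)) = (p, q) \<or> alg_final A c (zip rs (map f rs)) = (q, p)"
      by (intro force) auto
    moreover have "zip rs (map f rs) = map (\<lambda>r. (r, f r)) rs"
      by (induction rs) auto
    moreover have "sorted_conf (alg_final A c (map (\<lambda>r. (r, f r)) rs))"
      using memory_constrained_sorted_final[OF assms(1,2)] .
    ultimately show "alg_final A c (map (\<lambda>r. (r, f r)) rs) = (p, q)"
      using \<open>p < q\<close> by (auto simp: sorted_conf_def)
  qed
qed

section \<open>The consistency round\<close>

lemma cdist_to_cover_one_ge:
  assumes "covers e 1" "(2::real) \<le> z"
  shows "1 \<le> cdist (0, z) e"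
  using assms unfolding cdist_def covers_def min_def fst_conv snd_conv abs_real_def by smt

lemma cdist_cover_one_zero_far_ge:
  assumes "covers e 1" "covers d 0" "covers f z" "(2::real) \<le> z"
  shows "1 \<le> cdist e d + cdist d f"
  using assms unfolding cdist_def covers_def min_def fst_conv snd_conv abs_real_def by smt

lemma cdist_cover_one_zero_far_one_ge:
  assumes "covers e 1" "covers d 0" "covers f z" "covers h 1" "(2::real) \<le> z"
  shows "2 \<le> cdist e d + cdist d f + cdist f h"
  using assms unfolding cdist_def covers_def min_def fst_conv snd_conv abs_real_def by smt

lemma sched_cost_rounds_ge:
  fixes z :: real
  assumes z: "2 \<le> z" and rs: "set rs \<subseteq> {0, z}"
  shows "covers e 1 \<Longrightarrow> list_all2 covers cs ((0 # z # rs) @ concat (replicate k (1 # 0 # z # rs)))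
    \<Longrightarrow> 2 * real k + 1 \<le> sched_cost e cs"
proof (induction k arbitrary: e cs)
  case 0
  then obtain d f rest where "cs = d # f # rest" and d: "covers d 0" and f: "covers f z"
    by (auto simp: list_all2_Cons2)
  then show ?case
    using cdist_cover_one_zero_far_ge[OF 0(1) d f z] sched_cost_nonneg[of f rest] by simp
next
  case (Suc k)
  obtain d f rest where cs: "cs = d # f # rest" and d: "covers d 0" and f: "covers f z"
    and rest: "list_all2 covers rest (rs @ (1 # (0 # z # rs) @ concat (replicate k (1 # 0 # z # rs))))"
    using Suc.prems(2) by (auto simp: list_all2_Cons2)
  then obtain mid rest2 where "rest = mid @ rest2"
    and "list_all2 covers rest2 (1 # (0 # z # rs) @ concat (replicate k (1 # 0 # z # rs)))"
    unfolding list_all2_append2 by blast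
  then obtain h rest' where rest_eq: "rest = mid @ h # rest'" and h: "covers h 1"
    and rest': "list_all2 covers rest' ((0 # z # rs) @ concat (replicate k (1 # 0 # z # rs)))"
    by (auto simp: list_all2_Cons2)
  have "sched_cost f rest = sched_cost f mid + cdist (last (f # mid)) h + sched_cost h rest'"
    by (simp add: rest_eq sched_cost_append)
  then have "cdist f h + sched_cost h rest' \<le> sched_cost f rest"
    using cdist_last_le_sched_cost[of f mid] cdist_triangle[of f h "last (f # mid)"] by linarith
  moreover have "2 \<le> cdist e d + cdist d f + cdist f h"
    using cdist_cover_one_zero_far_one_ge[OF Suc.prems(1) d f h z] .
  moreover have "2 * real k + 1 \<le> sched_cost h rest'"
    using Suc.IH[OF h rest'] .
  ultimately show ?case by (simp add: cs)
qed

lemma opt_rounds_ge: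
  fixes z :: real
  assumes "2 \<le> z" "set rs \<subseteq> {0, z}"
  shows "2 * real n \<le> opt (0, z) (concat (replicate n (1 # 0 # z # rs)))"
proof (rule le_opt)
  fix cs
  assume cs: "list_all2 covers cs (concat (replicate n (1 # 0 # z # rs)))"
  show "2 * real n \<le> sched_cost (0, z) cs"
  proof (cases n)
    case 0
    then show ?thesis using sched_cost_nonneg by simp
  next
    case (Suc k)
    with cs obtain e cs' where "cs = e # cs'" "covers e 1"
      "list_all2 covers cs' ((0 # z # rs) @ concat (replicate k (1 # 0 # z # rs)))"
      by (auto simp: list_all2_Cons2)
    then show ?thesis
      using sched_cost_rounds_ge[OF assms] cdist_to_cover_one_ge[OF _ assms(1)] Suc
      by fastforce
  qed
qed

lemma consistency_rounds_costs:
  fixes z :: real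
  assumes z: "2 \<le> z" and rs: "set rs \<subseteq> {0, z}"
  defines "cyc \<equiv> [(1, 1), (0, 1), (z, 2)] @ map (\<lambda>r. (r, if r = 0 then 1 else 2)) rs"
  shows "opt (0, z) (map fst (concat (replicate n cyc))) = 2 * real n"
    and "eta (0, z) (concat (replicate n cyc)) = 0"
proof -
  define sc :: "conf list" where "sc = (1, z) # replicate (Suc (Suc (length rs))) (0, z)"
  have requests: "map fst cyc = 1 # 0 # z # rs"
    by (simp add: cyc_def comp_def)
  have "list_all2 covers sc (map fst cyc)"
    using covers_replicate[of "0 # z # rs" "(0, z)"] rs
    by (simp add: requests sc_def covers_def)
  then have "opt (0, z) (map fst (concat (replicate n cyc))) \<le> real n * sched_cost (0, z) sc"
    using opt_concat_replicate_le[of sc "map fst cyc" "(0, z)" n] by (simp add: sc_def map_concat)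
  moreover have "sched_cost (0, z) sc = 2"
    using z by (simp add: sc_def sched_cost_replicate cdist_def)
  moreover have "2 * real n \<le> opt (0, z) (map fst (concat (replicate n cyc)))"
    using opt_rounds_ge[OF z rs] by (simp add: map_concat requests)
  ultimately show opt: "opt (0, z) (map fst (concat (replicate n cyc))) = 2 * real n"
    by simp
  have "ftp_final (0, z) cyc = (0, z)" "ftp_cost (0, z) cyc = 2"
    using ftp_stationary[of 0 z rs] z rs
    by (simp_all add: cyc_def ftp_final_append ftp_cost_append ftp_step_def ftp_step_cost_def)
  then show "eta (0, z) (concat (replicate n cyc)) = 0"
    using ftp_cost_replicate[of "(0, z)" cyc n] by (simp add: eta_def opt)
qed

lemma consistency_round_trip_le:
  fixes z lam :: real
  assumes mc: "memory_constrained A" and cons: "consistent A (1 + lam)"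
    and "0 \<le> lam" and z: "2 \<le> z"
  defines "t1 \<equiv> A (0, z) 1 1" and "t2 \<equiv> A (A (0, z) 1 1) 0 1"
  shows "cdist (0, z) t1 + cdist t1 t2 + cdist t2 (0, z) \<le> 2 + 2 * lam"
proof -
  define t3 where "t3 = A t2 z 2"
  have start: "sorted_conf (0, z)" using z by (simp add: sorted_conf_def)
  then have "sorted_conf t3"
    unfolding t1_def t2_def t3_def by (intro memory_constrained_step[OF mc])+
  then obtain rs where rs: "set rs \<subseteq> {0, z}"
    and force: "\<And>f. (\<And>r. f r \<in> {1, 2}) \<Longrightarrow> alg_final A t3 (map (\<lambda>r. (r, f r)) rs) = (0, z)"
    using memory_constrained_force[OF mc, of t3 0 z] z by auto
  define F where "F = map (\<lambda>r. (r, if r = 0 then 1 else 2 :: nat)) rs"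
  define cyc where "cyc = [(1, 1), (0, 1), (z, 2)] @ F"
  have final: "alg_final A (0, z) cyc = (0, z)"
    using force[of "\<lambda>r. if r = 0 then 1 else 2"]
    by (simp add: cyc_def F_def alg_final_append t1_def t2_def t3_def)
  obtain C where C: "\<And>c I. sorted_conf c \<Longrightarrow> valid_preds I \<Longrightarrow> eta c I = 0
      \<Longrightarrow> alg_cost A c I \<le> (1 + lam) * opt c (map fst I) + C c"
    using cons unfolding consistent_def by blast
  have "alg_cost A (0, z) cyc \<le> (1 + lam) * 2"
  proof (rule periodic_cost_le[OF final _ _ C[OF start]])
    show "valid_preds (concat (replicate n cyc))" for n
      by (auto simp: valid_preds_def cyc_def F_def)
  qed (use consistency_rounds_costs[OF z rs] \<open>0 \<le> lam\<close> in \<open>simp_all add: cyc_def F_def\<close>)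
  moreover have "cdist (0, z) t1 + cdist t1 t2 + cdist t2 (0, z) \<le> alg_cost A (0, z) cyc"
    using alg_cost_with_return_le[of A "(0, z)" "[(1, 1), (0, 1), (z, 2)]" F] final
      cdist_triangle[of t2 "(0, z)" t3]
    by (simp add: cyc_def t1_def t2_def t3_def)
  ultimately show ?thesis by simp
qed

lemma round_trip_shape:
  fixes z lam :: real
  assumes z: "3 + 2 * lam < z" and "0 \<le> lam"
    and t1: "sorted_conf t1" "covers t1 1" and t2: "sorted_conf t2" "covers t2 0"
    and round_trip: "cdist (0, z) t1 + cdist t1 t2 + cdist t2 (0, z) \<le> 2 + 2 * lam"
  shows "fst t2 = 0" and "2 + (z - snd t2) \<le> cdist (0, z) t1 + cdist t1 t2"
    and "z - snd t2 \<le> lam"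
proof -
  obtain u v where t2_eq: "t2 = (u, v)" by fastforce
  have "u = 0"
  proof (rule ccontr)
    assume "u \<noteq> 0"
    with t2 have "v = 0" "u \<le> 0" by (auto simp: t2_eq sorted_conf_def covers_def)
    then have "z \<le> cdist t2 (0, z)" using z \<open>0 \<le> lam\<close> by (simp add: t2_eq cdist_def)
    with round_trip z cdist_nonneg[of "(0, z)" t1] cdist_nonneg[of t1 t2] show False by linarith
  qed
  then have "0 \<le> v" using t2 by (simp add: t2_eq sorted_conf_def)
  have return_cost: "cdist t2 (0, z) = \<bar>z - v\<bar>"
    using \<open>0 \<le> v\<close> z \<open>0 \<le> lam\<close> by (simp add: t2_eq \<open>u = 0\<close> cdist_def min_def abs_real_def)
  have "min (2 + (z - v)) (z - 1) \<le> cdist (0, z) t1 + cdist t1 t2"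
    using t1 \<open>0 \<le> v\<close> unfolding t2_eq \<open>u = 0\<close> cdist_def sorted_conf_def covers_def
    by (cases t1) (auto simp: min_def abs_real_def)
  with return_cost round_trip z show "fst t2 = 0" "2 + (z - snd t2) \<le> cdist (0, z) t1 + cdist t1 t2"
    "z - snd t2 \<le> lam"
    by (auto simp: t2_eq \<open>u = 0\<close> min_def abs_real_def split: if_splits)
qed

section \<open>The robustness round\<close>

definition alt_requests :: "nat \<Rightarrow> (real \<times> nat) list" where
  "alt_requests n = concat (replicate n [(1, 1), (0, 1)])"

definition alt_conf :: "alg \<Rightarrow> conf \<Rightarrow> nat \<Rightarrow> conf" where
  "alt_conf A c n = alg_final A c (alt_requests n)"

lemma alt_requests_add: "alt_requests (m + n) = alt_requests m @ alt_requests n"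
  by (simp add: alt_requests_def replicate_add)

lemma alt_requests_Suc: "alt_requests (Suc n) = alt_requests n @ [(1, 1), (0, 1)]"
  using alt_requests_add[of n 1] by (simp add: alt_requests_def)

lemma alt_conf_Suc: "alt_conf A c (Suc n) = A (A (alt_conf A c n) 1 1) 0 1"
  by (simp add: alt_conf_def alt_requests_Suc alg_final_append)

lemma alg_cost_alt_requests_Suc:
  "alg_cost A c (alt_requests (Suc n)) = alg_cost A c (alt_requests n)
     + cdist (alt_conf A c n) (A (alt_conf A c n) 1 1) + cdist (A (alt_conf A c n) 1 1) (alt_conf A c (Suc n))"
  by (simp add: alt_conf_def alt_requests_Suc alg_cost_append alg_final_append)

lemma alt_conf_drift:
  fixes lam b :: real
  assumes mc: "memory_constrained A" and cons: "consistent A (1 + lam)" and "0 \<le> lam"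
  shows "(\<forall>i<j. 3 + 2 * lam < snd (alt_conf A (0, b) i)) \<Longrightarrow> fst (alt_conf A (0, b) j) = 0
    \<and> 2 * real j + (b - snd (alt_conf A (0, b) j)) \<le> alg_cost A (0, b) (alt_requests j)
    \<and> b - snd (alt_conf A (0, b) j) \<le> lam * real j"
proof (induction j)
  case 0
  then show ?case by (simp add: alt_conf_def alt_requests_def)
next
  case (Suc j)
  define z where "z = snd (alt_conf A (0, b) j)"
  have z: "3 + 2 * lam < z" using Suc.prems z_def by simp
  with Suc have IH: "alt_conf A (0, b) j = (0, z)"
    "2 * real j + (b - z) \<le> alg_cost A (0, b) (alt_requests j)" "b - z \<le> lam * real j"
    by (simp_all add: z_def prod_eq_iff)
  define t1 where "t1 = A (0, z) 1 1"
  have "sorted_conf (0, z)" using z \<open>0 \<le> lam\<close> by (simp add: sorted_conf_def)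
  then have t1: "sorted_conf t1" "covers t1 1"
    unfolding t1_def by (rule memory_constrained_step[OF mc])+
  have t2: "sorted_conf (A t1 0 1)" "covers (A t1 0 1) 0"
    by (rule memory_constrained_step[OF mc t1(1)])+
  have "cdist (0, z) t1 + cdist t1 (A t1 0 1) + cdist (A t1 0 1) (0, z) \<le> 2 + 2 * lam"
    using consistency_round_trip_le[OF mc cons \<open>0 \<le> lam\<close>, of z] z \<open>0 \<le> lam\<close> by (simp add: t1_def)
  note shape = round_trip_shape[OF z \<open>0 \<le> lam\<close> t1 t2 this]
  have "alt_conf A (0, b) (Suc j) = A t1 0 1"
    by (simp add: alt_conf_Suc IH t1_def)
  with shape IH alg_cost_alt_requests_Suc[of A "(0, b)" j] show ?case
    by (simp add: t1_def algebra_simps)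
qed

lemma alt_cost_with_return_ge:
  fixes lam b :: real and N :: nat
  assumes mc: "memory_constrained A" and cons: "consistent A (1 + lam)" and "0 < lam"
  defines "T \<equiv> 3 + 2 * lam"
  obtains J where "J \<le> N" and "2 * min (real N) ((b - T) * (1 + 1 / lam))
    \<le> alg_cost A (0, b) (alt_requests J) + cdist (alt_conf A (0, b) J) (0, b)"
proof (cases "\<forall>i<N. T < snd (alt_conf A (0, b) i)")
  case True
  then have "fst (alt_conf A (0, b) N) = 0"
    "2 * real N + (b - snd (alt_conf A (0, b) N)) \<le> alg_cost A (0, b) (alt_requests N)"
    using alt_conf_drift[OF mc cons, of N b] \<open>0 < lam\<close> by (simp_all add: T_def)
  then have "2 * real N \<le> alg_cost A (0, b) (alt_requests N) + cdist (alt_conf A (0, b) N) (0, b)"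
    by (cases "alt_conf A (0, b) N") simp
  then show ?thesis
    by (intro that[of N]) auto
next
  case False
  then obtain i where "i < N" "snd (alt_conf A (0, b) i) \<le> T" by (auto simp: not_less)
  define J where "J = (LEAST i. snd (alt_conf A (0, b) i) \<le> T)"
  have "J \<le> N"
    using Least_le[of _ i] \<open>i < N\<close> \<open>snd (alt_conf A (0, b) i) \<le> T\<close> unfolding J_def by fastforce
  have "snd (alt_conf A (0, b) J) \<le> T"
    unfolding J_def by (rule LeastI) fact
  moreover have "\<forall>i<J. T < snd (alt_conf A (0, b) i)"
    unfolding J_def using not_less_Least by (metis not_le)
  then have "fst (alt_conf A (0, b) J) = 0"
    and cost: "2 * real J + (b - snd (alt_conf A (0, b) J)) \<le> alg_cost A (0, b) (alt_requests J)"
    and drift: "b - snd (alt_conf A (0, b) J) \<le> lam * real J"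
    using alt_conf_drift[OF mc cons, of J b] \<open>0 < lam\<close> by (simp_all add: T_def)
  moreover have "b - snd (alt_conf A (0, b) J) \<le> cdist (alt_conf A (0, b) J) (0, b)"
    using \<open>fst (alt_conf A (0, b) J) = 0\<close> by (cases "alt_conf A (0, b) J") simp
  ultimately have "2 * real J + 2 * (b - T)
      \<le> alg_cost A (0, b) (alt_requests J) + cdist (alt_conf A (0, b) J) (0, b)"
    using cost by (smt (verit))
  moreover have "(b - T) / lam \<le> real J"
    using drift \<open>snd (alt_conf A (0, b) J) \<le> T\<close> \<open>0 < lam\<close>
    by (simp add: pos_divide_le_eq mult.commute)
  moreover have "(b - T) * (1 + 1 / lam) = (b - T) + (b - T) / lam"
    by (simp add: algebra_simps)
  ultimately show ?thesis
    using \<open>J \<le> N\<close> min.cobounded2[of "real N" "(b - T) * (1 + 1 / lam)"]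
    by (intro that[of J]) (simp, smt (verit))
qed

lemma parked_schedule:
  fixes b :: real and N :: nat
  assumes "1 \<le> b" "set rs \<subseteq> {0, b}"
  defines "sc \<equiv> replicate (2 * N) (0, 1) @ replicate (Suc (length rs)) (0, b)"
  shows "list_all2 covers sc (map fst (alt_requests N) @ b # rs)"
    and "sched_cost (0, b) sc \<le> 2 * b" and "sc \<noteq> []" and "last sc = (0, b)"
proof -
  have "set (map fst (alt_requests N)) \<subseteq> {fst (0, 1), snd (0, 1)}"
    and "length (alt_requests N) = 2 * N"
    by (auto simp: alt_requests_def length_concat sum_list_replicate)
  then have "list_all2 covers (replicate (2 * N) (0, 1)) (map fst (alt_requests N))"
    using covers_replicate[of "map fst (alt_requests N)" "(0, 1)"] by simp
  moreover have "list_all2 covers (replicate (Suc (length rs)) (0, b)) (b # rs)"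
    using covers_replicate[of "b # rs" "(0, b)"] assms(2) by simp
  ultimately show "list_all2 covers sc (map fst (alt_requests N) @ b # rs)"
    unfolding sc_def by (rule list_all2_appendI)
  show "sched_cost (0, b) sc \<le> 2 * b" "sc \<noteq> []" "last sc = (0, b)"
    using assms(1) by (simp_all add: sc_def sched_cost_append sched_cost_replicate)
qed

lemma robust_rounds_bound:
  fixes lam b \<beta> :: real and N :: nat
  assumes mc: "memory_constrained A" and cons: "consistent A (1 + lam)"
    and "0 < lam" and "1 \<le> b" and "robust A \<beta>" and "0 \<le> \<beta>"
  shows "min (real N) ((b - (3 + 2 * lam)) * (1 + 1 / lam)) \<le> \<beta> * b"
proof -
  define d where "d = A (alt_conf A (0, b) N) b 2"
  have start: "sorted_conf (0, b)" using \<open>1 \<le> b\<close> by (simp add: sorted_conf_def)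
  then have "sorted_conf d"
    unfolding d_def alt_conf_def
    by (intro memory_constrained_step[OF mc] memory_constrained_sorted_final[OF mc])
  then obtain rs where rs: "set rs \<subseteq> {0, b}"
    and force: "\<And>f. (\<And>r. f r \<in> {1, 2}) \<Longrightarrow> alg_final A d (map (\<lambda>r. (r, f r)) rs) = (0, b)"
    using memory_constrained_force[OF mc, of d 0 b] \<open>1 \<le> b\<close> by auto
  define cyc where "cyc = alt_requests N @ (b, 2) # map (\<lambda>r. (r, 1)) rs"
  define sc :: "conf list" where "sc = replicate (2 * N) (0, 1) @ replicate (Suc (length rs)) (0, b)"
  have "map fst cyc = map fst (alt_requests N) @ b # rs"
    by (simp add: cyc_def comp_def)
  note sc = parked_schedule[OF \<open>1 \<le> b\<close> rs, of N, folded this sc_def]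
  have final: "alg_final A (0, b) cyc = (0, b)"
    using force[of "\<lambda>_. 1"] by (simp add: cyc_def alg_final_append alt_conf_def d_def)
  obtain J where "J \<le> N"
    and J: "2 * min (real N) ((b - (3 + 2 * lam)) * (1 + 1 / lam))
      \<le> alg_cost A (0, b) (alt_requests J) + cdist (alt_conf A (0, b) J) (0, b)"
    using alt_cost_with_return_ge[OF mc cons \<open>0 < lam\<close>] by blast
  have "cyc = alt_requests J @ alt_requests (N - J) @ (b, 2) # map (\<lambda>r. (r, 1)) rs"
    using \<open>J \<le> N\<close> alt_requests_add[of J "N - J"] by (simp add: cyc_def)
  with J final have "2 * min (real N) ((b - (3 + 2 * lam)) * (1 + 1 / lam)) \<le> alg_cost A (0, b) cyc"
    using alg_cost_with_return_le[of A "(0, b)" "alt_requests J"] by (fastforce simp: alt_conf_def)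
  also have "\<dots> \<le> \<beta> * sched_cost (0, b) sc"
    using robust_periodic_cost_le[OF \<open>robust A \<beta>\<close> \<open>0 \<le> \<beta>\<close> start _ final sc(1,3,4)]
    by (auto simp: valid_preds_def cyc_def alt_requests_def)
  also have "\<dots> \<le> \<beta> * (2 * b)"
    using sc(2) \<open>0 \<le> \<beta>\<close> by (rule mult_left_mono)
  finally show ?thesis by simp
qed

theorem theorem7:
  fixes A :: alg and lam \<beta>' :: real
  assumes "memory_constrained A"
    and "0 < lam" and "lam \<le> 1"
    and "consistent A (1 + lam)"
    and "\<beta>' < 1 + 1 / lam"
  shows "\<not> robust A \<beta>'"
proof
  assume "robust A \<beta>'"
  define \<beta> where "\<beta> = max \<beta>' 0"
  define T where "T = 3 + 2 * lam"
  define L where "L = 1 + 1 / lam"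
  have "0 < L" using assms(2) by (simp add: L_def add_pos_pos)
  then have robust: "robust A \<beta>" and "0 \<le> \<beta>" "\<beta> < L"
    using robust_mono[OF \<open>robust A \<beta>'\<close>] assms(5) unfolding \<beta>_def L_def[symmetric] by simp_all
  define b where "b = T * L / (L - \<beta>) + 1"
  have "T \<le> T * L / (L - \<beta>)"
    using \<open>0 \<le> \<beta>\<close> \<open>\<beta> < L\<close> assms(2) by (simp add: T_def le_divide_eq)
  then have "1 \<le> b" using assms(2) by (simp add: b_def T_def)
  have "(b - 1) * (L - \<beta>) = T * L"
    using \<open>\<beta> < L\<close> by (simp add: b_def)
  then have gap: "\<beta> * b < (b - T) * L"
    using \<open>\<beta> < L\<close> by (simp add: algebra_simps)
  obtain N :: nat where "(b - T) * L \<le> real N"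
    using real_nat_ceiling_ge by blast
  then have "(b - T) * L \<le> \<beta> * b"
    using robust_rounds_bound[OF assms(1,4,2) \<open>1 \<le> b\<close> robust \<open>0 \<le> \<beta>\<close>, of N]
    by (simp add: T_def L_def)
  with gap show False by linarith
qed

end
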